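(* Let $1\le p_0,p_1\le\infty$, let $\varphi$ be an admissible function, and let $\mu$ be an arbitrary measure on a measure space $\mathcal M$. Then for every $\mu$-measurable function $f$ and every $t>0$, $$ \big(R_{p_0,p_1,\varphi}(f^*_\mu)\big)^{**}(t)=R_{p_0,p_1,\varphi}(f^{**}_\mu)(t). $$
   Context: A function $\varphi:[1,\infty]\to[1,\infty]$ is admissible if $\varphi(1)=1$, $\varphi$ is log-concave on $[1,\infty)$, and there exist $\gamma,\beta>0$ with $\gamma/x\le\varphi'(x)/\varphi(x)\le\beta/x$ for all $x\ge1$. For a $\mu$-measurable $f$, the distribution function is $\lambda^\mu_f(y)=\mu(\{x:|f(x)|>y\})$, the decreasing rearrangement is $f^*_\mu(t)=\inf\{y>0:\lambda^\mu_f(y)\le t\}$, and $f^{**}_\mu(t)=\frac1t\int_0^t f^*_\mu(s)\,ds$, $t>0$. For a measurable function $g$ on $(0,\infty)$ (Lebesgue measure), $g^*$ and $g^{**}(t)=\frac1t\int_0^t g^*(s)\,ds$ are defined in the same way. For a positive measurable function $g$ on $(0,\infty)$ and $t>0$ (with $1/\infty=0$): $P_{p_0,\varphi}g(t)=t^{-1/p_0}\int_0^t\varphi\big(1-\log\frac st\big)g(s)\,\frac{ds}{s^{1-1/p_0}}$, $Q_{p_1}g(t)=t^{-1/p_1}\int_t^\infty g(s)\,\frac{ds}{s^{1-1/p_1}}$, and $R_{p_0,p_1,\varphi}g=P_{p_0,\varphi}g+Q_{p_1}g$. *)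

theory Defs
  imports "HOL-Analysis.Analysis"
begin

text \<open>Admissible functions. Only the values on the real half-line [1,\<infinity>) are relevant
(the argument 1 - log(s/t) of phi in the operator P is finite for s>0).\<close>
definition admissible :: "(real \<Rightarrow> real) \<Rightarrow> bool" where
  "admissible \<phi> \<longleftrightarrow>
     \<phi> 1 = 1 \<and> (\<forall>x\<ge>1. 1 \<le> \<phi> x) \<and>
     concave_on {1..} (\<lambda>x. ln (\<phi> x)) \<and>
     (\<exists>\<gamma> \<beta> \<phi>'. \<gamma> > 0 \<and> \<beta> > 0 \<and>
        (\<forall>x\<ge>1. (\<phi> has_real_derivative \<phi>' x) (at x within {1..}) \<and>
                 \<gamma> / x \<le> \<phi>' x / \<phi> x \<and> \<phi>' x / \<phi> x \<le> \<beta> / x))"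

definition distribution_fn :: "'a measure \<Rightarrow> ('a \<Rightarrow> ennreal) \<Rightarrow> real \<Rightarrow> ennreal" where
  "distribution_fn M g y = emeasure M {x \<in> space M. ennreal y < g x}"

text \<open>Decreasing rearrangement: inf {y > 0. lambda(y) \<le> t}; inf of the empty set is \<infinity>.\<close>
definition rearrangement :: "'a measure \<Rightarrow> ('a \<Rightarrow> ennreal) \<Rightarrow> real \<Rightarrow> ennreal" where
  "rearrangement M g t = (INF y \<in> {y. 0 < y \<and> distribution_fn M g y \<le> ennreal t}. ennreal y)"

definition double_star :: "'a measure \<Rightarrow> ('a \<Rightarrow> ennreal) \<Rightarrow> real \<Rightarrow> ennreal" where
  "double_star M g t = ennreal (1 / t) * (\<integral>\<^sup>+ s \<in> {0<..<t}. rearrangement M g s \<partial>lborel)"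

definition half_line :: "real measure" where
  "half_line = restrict_space lborel {0<..}"

text \<open>1/p for p \<in> [1,\<infinity>], with 1/\<infinity> = 0.\<close>
definition inv_exp :: "ereal \<Rightarrow> real" where
  "inv_exp p = real_of_ereal (inverse p)"

definition P_op :: "ereal \<Rightarrow> (real \<Rightarrow> real) \<Rightarrow> (real \<Rightarrow> ennreal) \<Rightarrow> real \<Rightarrow> ennreal" where
  "P_op p0 \<phi> g t = ennreal (t powr (- inv_exp p0)) *
     (\<integral>\<^sup>+ s \<in> {0<..<t}. ennreal (\<phi> (1 - ln (s / t)) * s powr (inv_exp p0 - 1)) * g s \<partial>lborel)"

definition Q_op :: "ereal \<Rightarrow> (real \<Rightarrow> ennreal) \<Rightarrow> real \<Rightarrow> ennreal" where
  "Q_op p1 g t = ennreal (t powr (- inv_exp p1)) *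
     (\<integral>\<^sup>+ s \<in> {t<..}. ennreal (s powr (inv_exp p1 - 1)) * g s \<partial>lborel)"

definition R_op :: "ereal \<Rightarrow> ereal \<Rightarrow> (real \<Rightarrow> real) \<Rightarrow> (real \<Rightarrow> ennreal) \<Rightarrow> real \<Rightarrow> ennreal" where
  "R_op p0 p1 \<phi> g t = P_op p0 \<phi> g t + Q_op p1 g t"

end

theory Submission
  imports Defs
begin

text \<open>Substituting \<open>s = t u\<close> shows that \<open>R = P + Q\<close> acts on functions on \<open>(0,\<infinity>)\<close>
  as a Mellin convolution \<open>g \<mapsto> \<integral> k(u) g(tu) du\<close> with a kernel \<open>k\<close> supported in \<open>(0,\<infinity>)\<close>.
  By Fubini's theorem and a dilation, every such convolution commutes with the Hardy averaging
  operator \<open>g \<mapsto> (1/t) \<integral>\<^sub>0\<^sup>t g\<close>, which maps \<open>f\<^sup>*\<close> to \<open>f\<^sup>*\<^sup>*\<close>. It remains to see that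
  \<open>(R f\<^sup>*)\<^sup>*\<^sup>*\<close> is the Hardy average of \<open>R f\<^sup>*\<close>: this function is nonincreasing, and the decreasing
  rearrangement of a nonincreasing function \<open>h\<close> on \<open>(0,\<infinity>)\<close> is squeezed between \<open>h\<close> and its
  dilates \<open>h(c \<cdot>)\<close>, \<open>c > 1\<close>, so both have the same integrals over \<open>(0,t)\<close>.\<close>

lemma borel_measurable_antimono:
  fixes h :: "real \<Rightarrow> 'b::{linorder_topology, second_countable_topology}"
  assumes "antimono h"
  shows "h \<in> borel_measurable borel"
proof (rule borel_measurableI_greater)
  fix y
  have "is_interval {x. y < h x}"
    unfolding is_interval_1 using assms by (auto intro: less_le_trans dest: antimonoD)
  then show "{x \<in> space borel. y < h x} \<in> sets borel"
    using real_interval_borel_measurable by simp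
qed

text \<open>Extending by \<open>\<top>\<close> rather than \<open>0\<close> keeps functions that are nonincreasing on \<open>(0,\<infinity>)\<close>
  nonincreasing on all of \<open>\<real>\<close>, hence Borel measurable.\<close>

definition top_extension :: "(real \<Rightarrow> 'b::top) \<Rightarrow> real \<Rightarrow> 'b" where
  "top_extension h s = (if 0 < s then h s else top)"

lemma top_extension_pos [simp]: "0 < s \<Longrightarrow> top_extension h s = h s"
  by (simp add: top_extension_def)

lemma borel_measurable_top_extension:
  fixes h :: "real \<Rightarrow> 'b::{linorder_topology, second_countable_topology, order_top}"
  assumes "antimono_on {0<..} h"
  shows "top_extension h \<in> borel_measurable borel"
proof (rule borel_measurable_antimono, rule antimonoI)
  fix x y :: real assume "x \<le> y"
  then show "top_extension h y \<le> top_extension h x"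
    using assms by (auto simp: top_extension_def intro: monotone_onD)
qed

lemma nn_integral_lborel_dilation:
  fixes f :: "real \<Rightarrow> ennreal"
  assumes "f \<in> borel_measurable borel" and c: "c > 0"
  shows "(\<integral>\<^sup>+x. f (c * x) \<partial>lborel) = ennreal (1 / c) * (\<integral>\<^sup>+x. f x \<partial>lborel)"
proof -
  have "ennreal (1 / c) * (\<integral>\<^sup>+x. f x \<partial>lborel)
      = (ennreal (1 / c) * ennreal c) * (\<integral>\<^sup>+x. f (0 + c * x) \<partial>lborel)"
    using nn_integral_real_affine[OF assms(1), of c 0] c by (simp add: mult.assoc)
  also have "ennreal (1 / c) * ennreal c = 1"
    using c by (simp add: ennreal_mult'[symmetric])
  finally show ?thesis by simp
qed

lemma nn_integral_interval_dilation:
  assumes g: "antimono_on {0<..} g" and u: "u > 0"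
  shows "(\<integral>\<^sup>+v \<in> {0<..<t}. g (u * v) \<partial>lborel)
       = ennreal (1 / u) * (\<integral>\<^sup>+w \<in> {0<..<t * u}. g w \<partial>lborel)"
proof -
  have [measurable]: "top_extension g \<in> borel_measurable borel"
    by (rule borel_measurable_top_extension[OF g])
  have "(\<integral>\<^sup>+v \<in> {0<..<t}. g (u * v) \<partial>lborel)
      = (\<integral>\<^sup>+v. (\<lambda>w. top_extension g w * indicator {0<..<t * u} w) (u * v) \<partial>lborel)"
    using u by (intro nn_integral_cong) (auto simp: indicator_def mult.commute zero_less_mult_iff)
  also have "\<dots> = ennreal (1 / u) * (\<integral>\<^sup>+w \<in> {0<..<t * u}. top_extension g w \<partial>lborel)"
    using u by (intro nn_integral_lborel_dilation) measurable
  also have "(\<integral>\<^sup>+w \<in> {0<..<t * u}. top_extension g w \<partial>lborel) = (\<integral>\<^sup>+w \<in> {0<..<t * u}. g w \<partial>lborel)"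
    by (intro nn_integral_cong) (auto simp: indicator_def)
  finally show ?thesis .
qed

definition mellin_conv :: "(real \<Rightarrow> ennreal) \<Rightarrow> (real \<Rightarrow> ennreal) \<Rightarrow> real \<Rightarrow> ennreal" where
  "mellin_conv k g t = (\<integral>\<^sup>+u. k u * g (t * u) \<partial>lborel)"

definition hardy_op :: "(real \<Rightarrow> ennreal) \<Rightarrow> real \<Rightarrow> ennreal" where
  "hardy_op g t = ennreal (1 / t) * (\<integral>\<^sup>+s \<in> {0<..<t}. g s \<partial>lborel)"

lemma double_star_eq_hardy_op: "double_star M G = hardy_op (rearrangement M G)"
  by (simp add: fun_eq_iff double_star_def hardy_op_def)

lemma hardy_op_cong:
  assumes "\<And>s. 0 < s \<Longrightarrow> s < t \<Longrightarrow> g s = g' s"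
  shows "hardy_op g t = hardy_op g' t"
proof -
  have "(\<integral>\<^sup>+s \<in> {0<..<t}. g s \<partial>lborel) = (\<integral>\<^sup>+s \<in> {0<..<t}. g' s \<partial>lborel)"
    using assms by (intro nn_integral_cong) (simp add: indicator_def)
  then show ?thesis
    by (simp add: hardy_op_def)
qed

lemma mellin_conv_top_extension:
  assumes "\<And>u. u \<le> 0 \<Longrightarrow> k u = 0" and "t > 0"
  shows "mellin_conv k (top_extension g) t = mellin_conv k g t"
  unfolding mellin_conv_def
proof (rule nn_integral_cong)
  fix u
  show "k u * top_extension g (t * u) = k u * g (t * u)"
    using assms by (cases "u \<le> 0") auto
qed

lemma mellin_conv_add:
  assumes [measurable]: "k\<^sub>1 \<in> borel_measurable borel" "k\<^sub>2 \<in> borel_measurable borel"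
    "g \<in> borel_measurable borel"
  shows "mellin_conv (\<lambda>u. k\<^sub>1 u + k\<^sub>2 u) g t = mellin_conv k\<^sub>1 g t + mellin_conv k\<^sub>2 g t"
  unfolding mellin_conv_def distrib_right by (rule nn_integral_add) measurable

lemma mellin_conv_antimono:
  assumes "\<And>u. u \<le> 0 \<Longrightarrow> k u = 0" and g: "antimono_on {0<..} g"
  shows "antimono_on {0<..} (mellin_conv k g)"
proof (rule monotone_onI)
  fix x y :: real assume "x \<in> {0<..}" "x \<le> y"
  then have "k u * g (y * u) \<le> k u * g (x * u)" for u
    using assms by (cases "u \<le> 0") (auto intro!: mult_left_mono monotone_onD[OF g] mult_right_mono)
  then show "mellin_conv k g y \<le> mellin_conv k g x"
    unfolding mellin_conv_def by (rule nn_integral_mono)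
qed

lemma hardy_op_eq_mellin_conv:
  assumes g: "antimono_on {0<..} g" and s: "s > 0"
  shows "hardy_op g s = mellin_conv (indicator {0<..<1}) g s"
proof -
  have "mellin_conv (indicator {0<..<1}) g s = (\<integral>\<^sup>+v \<in> {0<..<1}. g (s * v) \<partial>lborel)"
    unfolding mellin_conv_def by (simp add: mult.commute)
  also have "\<dots> = hardy_op g s"
    using nn_integral_interval_dilation[OF g s, of 1] by (simp add: hardy_op_def)
  finally show ?thesis by simp
qed

lemma hardy_op_antimono:
  assumes g: "antimono_on {0<..} g"
  shows "antimono_on {0<..} (hardy_op g)"
proof -
  have "antimono_on {0<..} (mellin_conv (indicator {0<..<1}) g)"
    using g by (intro mellin_conv_antimono) auto
  then show ?thesis
    using hardy_op_eq_mellin_conv[OF g] by (simp add: monotone_on_def)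
qed

lemma hardy_op_mellin_conv:
  assumes [measurable]: "k \<in> borel_measurable borel" and k: "\<And>u. u \<le> 0 \<Longrightarrow> k u = 0"
    and g: "antimono_on {0<..} g" and t: "t > 0"
  shows "hardy_op (mellin_conv k g) t = mellin_conv k (hardy_op g) t"
proof -
  have [measurable]: "top_extension g \<in> borel_measurable borel"
    by (rule borel_measurable_top_extension[OF g])
  define F where "F u v = k u * top_extension g (v * u) * indicator {0<..<t} v" for u v
  have [measurable]: "case_prod F \<in> borel_measurable (lborel \<Otimes>\<^sub>M lborel)"
    unfolding F_def by measurable
  have inner: "ennreal (1 / t) * (\<integral>\<^sup>+v. F u v \<partial>lborel) = k u * hardy_op g (t * u)" for u
  proof (cases "u \<le> 0")
    case False
    then have u: "u > 0" by simp
    have "(\<integral>\<^sup>+v. F u v \<partial>lborel) = k u * (\<integral>\<^sup>+v \<in> {0<..<t}. top_extension g (u * v) \<partial>lborel)"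
      unfolding F_def by (subst nn_integral_cmult[symmetric]) (simp_all add: ac_simps)
    also have "(\<integral>\<^sup>+v \<in> {0<..<t}. top_extension g (u * v) \<partial>lborel) = (\<integral>\<^sup>+v \<in> {0<..<t}. g (u * v) \<partial>lborel)"
      using u by (intro nn_integral_cong) (simp add: indicator_def)
    also have "\<dots> = ennreal (1 / u) * (\<integral>\<^sup>+w \<in> {0<..<t * u}. g w \<partial>lborel)"
      by (rule nn_integral_interval_dilation[OF g u])
    finally have "ennreal (1 / t) * (\<integral>\<^sup>+v. F u v \<partial>lborel)
        = k u * (ennreal (1 / t) * ennreal (1 / u) * (\<integral>\<^sup>+w \<in> {0<..<t * u}. g w \<partial>lborel))"
      by (simp add: ac_simps)
    also have "ennreal (1 / t) * ennreal (1 / u) = ennreal (1 / (t * u))"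
      using t u by (simp add: ennreal_mult'[symmetric])
    finally show ?thesis by (simp add: hardy_op_def mult.commute)
  qed (simp add: F_def k)
  have "hardy_op (mellin_conv k g) t = ennreal (1 / t) * (\<integral>\<^sup>+v. \<integral>\<^sup>+u. F u v \<partial>lborel \<partial>lborel)"
    unfolding hardy_op_def
  proof (intro arg_cong2[where f = "(*)"] refl nn_integral_cong)
    fix v
    show "mellin_conv k g v * indicator {0<..<t} v = (\<integral>\<^sup>+u. F u v \<partial>lborel)"
      using mellin_conv_top_extension[OF k, where t = v and g = g]
      by (cases "v \<in> {0<..<t}") (auto simp: mellin_conv_def F_def ac_simps)
  qed
  also have "\<dots> = ennreal (1 / t) * (\<integral>\<^sup>+u. \<integral>\<^sup>+v. F u v \<partial>lborel \<partial>lborel)"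
    by (subst lborel_pair.Fubini') simp_all
  also have "\<dots> = (\<integral>\<^sup>+u. ennreal (1 / t) * (\<integral>\<^sup>+v. F u v \<partial>lborel) \<partial>lborel)"
    by (rule nn_integral_cmult[symmetric]) measurable
  also have "\<dots> = mellin_conv k (hardy_op g) t"
    unfolding inner mellin_conv_def ..
  finally show ?thesis .
qed

lemma nn_integral_homogeneous_kernel:
  fixes K g :: "real \<Rightarrow> ennreal"
  assumes [measurable]: "K \<in> borel_measurable borel" "g \<in> borel_measurable borel"
    and K: "\<And>u. u \<le> 0 \<Longrightarrow> K u = 0" and t: "t > 0"
  shows "ennreal (t powr - a) * (\<integral>\<^sup>+s. ennreal (s powr (a - 1)) * K (s / t) * g s \<partial>lborel)
       = mellin_conv (\<lambda>u. ennreal (u powr (a - 1)) * K u) g t"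
proof -
  have dilate: "ennreal ((t * u) powr (a - 1)) * K u * g (t * u)
      = ennreal (t powr (a - 1)) * (ennreal (u powr (a - 1)) * K u * g (t * u))" for u
  proof (cases "u \<le> 0")
    case False
    then show ?thesis
      using t by (simp add: powr_mult ennreal_mult ac_simps)
  qed (simp add: K)
  have "(\<integral>\<^sup>+s. ennreal (s powr (a - 1)) * K (s / t) * g s \<partial>lborel)
      = ennreal t * (\<integral>\<^sup>+u. ennreal (t powr (a - 1)) * (ennreal (u powr (a - 1)) * K u * g (t * u)) \<partial>lborel)"
    using nn_integral_real_affine[of "\<lambda>s. ennreal (s powr (a - 1)) * K (s / t) * g s" t 0] t
    by (simp add: dilate)
  also have "\<dots> = ennreal (t * t powr (a - 1)) * mellin_conv (\<lambda>u. ennreal (u powr (a - 1)) * K u) g t"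
    unfolding mellin_conv_def using t by (subst nn_integral_cmult) (simp_all add: ennreal_mult mult.assoc)
  finally have "ennreal (t powr - a) * (\<integral>\<^sup>+s. ennreal (s powr (a - 1)) * K (s / t) * g s \<partial>lborel)
      = ennreal (t powr - a * (t * t powr (a - 1))) * mellin_conv (\<lambda>u. ennreal (u powr (a - 1)) * K u) g t"
    using t by (simp add: ennreal_mult mult.assoc)
  also have "t powr - a * (t * t powr (a - 1)) = 1"
    using t by (simp add: powr_mult_base powr_minus)
  finally show ?thesis
    by simp
qed

definition P_kernel :: "ereal \<Rightarrow> (real \<Rightarrow> real) \<Rightarrow> real \<Rightarrow> ennreal" where
  "P_kernel p0 \<phi> u = ennreal (u powr (inv_exp p0 - 1)) * ennreal (indicator {0<..<1} u * \<phi> (1 - ln u))"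

definition Q_kernel :: "ereal \<Rightarrow> real \<Rightarrow> ennreal" where
  "Q_kernel p1 u = ennreal (u powr (inv_exp p1 - 1)) * indicator {1<..} u"

definition R_kernel :: "ereal \<Rightarrow> ereal \<Rightarrow> (real \<Rightarrow> real) \<Rightarrow> real \<Rightarrow> ennreal" where
  "R_kernel p0 p1 \<phi> u = P_kernel p0 \<phi> u + Q_kernel p1 u"

lemma borel_measurable_indicator_log_comp:
  fixes \<phi> :: "real \<Rightarrow> real"
  assumes "continuous_on {1..} \<phi>"
  shows "(\<lambda>u. indicator {0<..<1} u * \<phi> (1 - ln u)) \<in> borel_measurable borel"
proof -
  have arg: "continuous_on {0<..<1} (\<lambda>u::real. 1 - ln u)"
    by (intro continuous_intros) auto
  have "continuous_on {0<..<1} (\<lambda>u. \<phi> (1 - ln u))"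
    by (rule continuous_on_compose2[OF assms arg]) (auto simp: ln_le_zero_iff)
  from borel_measurable_continuous_on_indicator[OF _ this] show ?thesis
    by simp
qed

lemma borel_measurable_P_kernel:
  "continuous_on {1..} \<phi> \<Longrightarrow> P_kernel p0 \<phi> \<in> borel_measurable borel"
  unfolding P_kernel_def[abs_def] using borel_measurable_indicator_log_comp by measurable

lemma borel_measurable_Q_kernel: "Q_kernel p1 \<in> borel_measurable borel"
  unfolding Q_kernel_def[abs_def] by measurable

lemma borel_measurable_R_kernel:
  "continuous_on {1..} \<phi> \<Longrightarrow> R_kernel p0 p1 \<phi> \<in> borel_measurable borel"
  unfolding R_kernel_def[abs_def]
  using borel_measurable_P_kernel borel_measurable_Q_kernel by measurable

lemma R_kernel_nonpos: "u \<le> 0 \<Longrightarrow> R_kernel p0 p1 \<phi> u = 0"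
  by (simp add: R_kernel_def P_kernel_def Q_kernel_def)

lemma P_op_eq_mellin_conv:
  assumes \<phi>: "continuous_on {1..} \<phi>" "\<And>x. 1 \<le> x \<Longrightarrow> 0 \<le> \<phi> x"
    and g: "antimono_on {0<..} g" and t: "t > 0"
  shows "P_op p0 \<phi> g t = mellin_conv (P_kernel p0 \<phi>) (top_extension g) t"
proof -
  define K where "K u = ennreal (indicator {0<..<1} u * \<phi> (1 - ln u))" for u
  have [measurable]: "K \<in> borel_measurable borel"
    unfolding K_def[abs_def] using borel_measurable_indicator_log_comp[OF \<phi>(1)] by measurable
  have [measurable]: "top_extension g \<in> borel_measurable borel"
    by (rule borel_measurable_top_extension[OF g])
  have "ennreal (\<phi> (1 - ln (s / t)) * s powr (inv_exp p0 - 1)) * g s * indicator {0<..<t} s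
      = ennreal (s powr (inv_exp p0 - 1)) * K (s / t) * top_extension g s" for s
  proof (cases "s \<in> {0<..<t}")
    case True
    then have "0 \<le> \<phi> (1 - ln (s / t))"
      using t by (intro \<phi>(2)) (simp add: ln_less_zero_iff)
    then show ?thesis
      using True t by (simp add: K_def ennreal_mult ac_simps)
  qed (use t in \<open>auto simp: K_def indicator_def zero_less_divide_iff divide_less_eq\<close>)
  then have "P_op p0 \<phi> g t = ennreal (t powr - inv_exp p0)
      * (\<integral>\<^sup>+s. ennreal (s powr (inv_exp p0 - 1)) * K (s / t) * top_extension g s \<partial>lborel)"
    unfolding P_op_def by simp
  also have "\<dots> = mellin_conv (P_kernel p0 \<phi>) (top_extension g) t"
    using t by (subst nn_integral_homogeneous_kernel) (simp_all add: K_def P_kernel_def[abs_def])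
  finally show ?thesis .
qed

lemma Q_op_eq_mellin_conv:
  assumes g: "antimono_on {0<..} g" and t: "t > 0"
  shows "Q_op p1 g t = mellin_conv (Q_kernel p1) (top_extension g) t"
proof -
  have [measurable]: "top_extension g \<in> borel_measurable borel"
    by (rule borel_measurable_top_extension[OF g])
  have "ennreal (s powr (inv_exp p1 - 1)) * g s * indicator {t<..} s
      = ennreal (s powr (inv_exp p1 - 1)) * indicator {1<..} (s / t) * top_extension g s" for s
    using t by (auto simp: indicator_def)
  then have "Q_op p1 g t = ennreal (t powr - inv_exp p1)
      * (\<integral>\<^sup>+s. ennreal (s powr (inv_exp p1 - 1)) * indicator {1<..} (s / t) * top_extension g s \<partial>lborel)"
    unfolding Q_op_def by simp
  also have "\<dots> = mellin_conv (Q_kernel p1) (top_extension g) t"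
    using t by (subst nn_integral_homogeneous_kernel) (simp_all add: Q_kernel_def[abs_def])
  finally show ?thesis .
qed

lemma R_op_eq_mellin_conv:
  assumes \<phi>: "continuous_on {1..} \<phi>" "\<And>x. 1 \<le> x \<Longrightarrow> 0 \<le> \<phi> x"
    and g: "antimono_on {0<..} g" and t: "t > 0"
  shows "R_op p0 p1 \<phi> g t = mellin_conv (R_kernel p0 p1 \<phi>) g t"
proof -
  have "R_op p0 p1 \<phi> g t = mellin_conv (R_kernel p0 p1 \<phi>) (top_extension g) t"
    unfolding R_op_def R_kernel_def[abs_def]
    using P_op_eq_mellin_conv[OF \<phi> g t] Q_op_eq_mellin_conv[OF g t]
    by (simp add: mellin_conv_add borel_measurable_P_kernel[OF \<phi>(1)] borel_measurable_Q_kernel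
        borel_measurable_top_extension[OF g])
  also have "\<dots> = mellin_conv (R_kernel p0 p1 \<phi>) g t"
    using t by (intro mellin_conv_top_extension R_kernel_nonpos)
  finally show ?thesis .
qed

lemma antimono_rearrangement: "antimono (rearrangement M G)"
  unfolding antimono_def rearrangement_def
  by (auto intro!: INF_superset_mono intro: order_trans ennreal_leI)

lemma space_half_line [simp]: "space half_line = {0<..}"
  by (simp add: half_line_def space_restrict_space)

lemma emeasure_half_line: "A \<subseteq> {0<..} \<Longrightarrow> emeasure half_line A = emeasure lborel A"
  unfolding half_line_def by (rule emeasure_restrict_space) auto

lemma rearrangement_half_line_le:
  assumes h: "antimono_on {0<..} h" and s: "s > 0"
  shows "rearrangement half_line h s \<le> h s"
proof -
  have bound: "rearrangement half_line h s \<le> ennreal y" if y: "0 < y" "h s \<le> ennreal y" for y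
  proof -
    have "x < s" if "x > 0" "ennreal y < h x" for x
    proof (rule ccontr)
      assume "\<not> x < s"
      then have "h x \<le> h s"
        using s that by (auto intro: monotone_onD[OF h])
      then show False
        using y that by simp
    qed
    then have "{x \<in> space half_line. ennreal y < h x} \<subseteq> {0<..<s}"
      by auto
    then have "distribution_fn half_line h y \<le> emeasure lborel {0<..<s}"
      unfolding distribution_fn_def by (subst emeasure_half_line) (auto intro: emeasure_mono)
    then show ?thesis
      unfolding rearrangement_def using y s by (auto intro!: INF_lower2)
  qed
  show ?thesis
  proof (cases "h s" rule: ennreal_cases)
    case (real r)
    show ?thesis
    proof (rule ennreal_le_epsilon)
      fix e :: real assume "0 < e"
      then show "rearrangement half_line h s \<le> h s + ennreal e"
        using real bound[of "r + e"] by (simp add: ennreal_plus)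
    qed
  qed simp
qed

lemma rearrangement_half_line_ge:
  assumes h: "antimono_on {0<..} h" and s: "0 < s" "s < s'"
  shows "h s' \<le> rearrangement half_line h s"
  unfolding rearrangement_def
proof (rule INF_greatest)
  have [measurable]: "top_extension h \<in> borel_measurable half_line"
    unfolding half_line_def
    by (intro measurable_restrict_space1) (simp add: borel_measurable_top_extension[OF h])
  fix y assume "y \<in> {y. 0 < y \<and> distribution_fn half_line h y \<le> ennreal s}"
  then have level: "distribution_fn half_line h y \<le> ennreal s" by simp
  show "h s' \<le> ennreal y"
  proof (rule ccontr)
    assume "\<not> h s' \<le> ennreal y"
    moreover have "h s' \<le> h x" if "x \<in> {0<..s'}" for x
      using s that by (auto intro: monotone_onD[OF h])
    ultimately have "{0<..s'} \<subseteq> {x \<in> space half_line. ennreal y < top_extension h x}"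
      by (auto simp: not_le intro: less_le_trans)
    then have "emeasure half_line {0<..s'}
        \<le> emeasure half_line {x \<in> space half_line. ennreal y < top_extension h x}"
      by (rule emeasure_mono) measurable
    also have "\<dots> = distribution_fn half_line h y"
      unfolding distribution_fn_def by (intro arg_cong[where f = "emeasure half_line"]) auto
    also have "emeasure half_line {0<..s'} = ennreal s'"
      using s by (subst emeasure_half_line) auto
    finally have "ennreal s' \<le> ennreal s"
      using level by (rule order.trans)
    then show False
      using s by simp
  qed
qed

lemma ennreal_le_of_scaled_le:
  fixes x y :: ennreal
  assumes "\<And>c::real. c > 1 \<Longrightarrow> ennreal (1 / c) * x \<le> y"
  shows "x \<le> y"
proof (cases x rule: ennreal_cases)
  case top
  then show ?thesis using assms[of 2] by (simp add: ennreal_mult_top)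
next
  case (real a)
  show ?thesis
  proof (cases y rule: ennreal_cases)
    case (real b)
    have "a \<le> b"
    proof (rule field_le_mult_one_interval)
      fix z :: real assume z: "0 < z" "z < 1"
      then have "ennreal (1 / (1 / z)) * x \<le> y" by (intro assms) simp
      then show "z * a \<le> b"
        using z \<open>x = ennreal a\<close> \<open>0 \<le> a\<close> real by (simp add: ennreal_mult[symmetric])
    qed
    then show ?thesis using real \<open>x = ennreal a\<close> by simp
  qed simp
qed

lemma double_star_half_line:
  assumes h: "antimono_on {0<..} h" and t: "t > 0"
  shows "double_star half_line h t = hardy_op h t"
proof -
  have "(\<integral>\<^sup>+s \<in> {0<..<t}. rearrangement half_line h s \<partial>lborel) = (\<integral>\<^sup>+s \<in> {0<..<t}. h s \<partial>lborel)"
  proof (rule antisym)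
    show "(\<integral>\<^sup>+s \<in> {0<..<t}. rearrangement half_line h s \<partial>lborel) \<le> (\<integral>\<^sup>+s \<in> {0<..<t}. h s \<partial>lborel)"
      by (intro nn_integral_mono) (auto simp: indicator_def intro: rearrangement_half_line_le[OF h])
  next
    show "(\<integral>\<^sup>+s \<in> {0<..<t}. h s \<partial>lborel) \<le> (\<integral>\<^sup>+s \<in> {0<..<t}. rearrangement half_line h s \<partial>lborel)"
    proof (rule ennreal_le_of_scaled_le)
      fix c :: real assume c: "c > 1"
      have "ennreal (1 / c) * (\<integral>\<^sup>+s \<in> {0<..<t}. h s \<partial>lborel)
          \<le> ennreal (1 / c) * (\<integral>\<^sup>+s \<in> {0<..<t * c}. h s \<partial>lborel)"
        using t c less_trans[of _ t "t * c"]
        by (intro mult_left_mono nn_integral_mono) (auto simp: indicator_def)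
      also have "\<dots> = (\<integral>\<^sup>+v \<in> {0<..<t}. h (c * v) \<partial>lborel)"
        using c by (simp add: nn_integral_interval_dilation[OF h])
      also have "\<dots> \<le> (\<integral>\<^sup>+s \<in> {0<..<t}. rearrangement half_line h s \<partial>lborel)"
        using c by (intro nn_integral_mono)
          (auto simp: indicator_def intro!: rearrangement_half_line_ge[OF h])
      finally show "ennreal (1 / c) * (\<integral>\<^sup>+s \<in> {0<..<t}. h s \<partial>lborel)
          \<le> (\<integral>\<^sup>+s \<in> {0<..<t}. rearrangement half_line h s \<partial>lborel)" .
    qed
  qed
  then show ?thesis
    by (simp add: double_star_def hardy_op_def)
qed

theorem mainTheorem2:
  fixes p0 p1 :: ereal and \<phi> :: "real \<Rightarrow> real" and M :: "'a measure"
    and f :: "'a \<Rightarrow> real" and t :: real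
  assumes "1 \<le> p0" and "1 \<le> p1"
    and "admissible \<phi>"
    and "f \<in> borel_measurable M"
    and "t > 0"
  shows "double_star half_line (R_op p0 p1 \<phi> (rearrangement M (\<lambda>x. ennreal \<bar>f x\<bar>))) t
         = R_op p0 p1 \<phi> (double_star M (\<lambda>x. ennreal \<bar>f x\<bar>)) t"
proof -
  have \<phi>: "continuous_on {1..} \<phi>" "\<And>x. 1 \<le> x \<Longrightarrow> 0 \<le> \<phi> x"
    using \<open>admissible \<phi>\<close> unfolding admissible_def
    by (metis DERIV_continuous_on atLeast_iff, fastforce)
  define g where "g = rearrangement M (\<lambda>x. ennreal \<bar>f x\<bar>)"
  define k where "k = R_kernel p0 p1 \<phi>"
  have g: "antimono_on {0<..} g"
    unfolding g_def using antimono_rearrangement by (auto simp: monotone_on_def antimono_def)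
  have k: "k \<in> borel_measurable borel" "\<And>u. u \<le> 0 \<Longrightarrow> k u = 0"
    unfolding k_def using borel_measurable_R_kernel[OF \<phi>(1)] R_kernel_nonpos by auto
  have R_g: "R_op p0 p1 \<phi> g s = mellin_conv k g s" if "s > 0" for s
    unfolding k_def using R_op_eq_mellin_conv[OF \<phi> g that] .
  have "antimono_on {0<..} (R_op p0 p1 \<phi> g)"
    using mellin_conv_antimono[OF k(2) g] by (simp add: monotone_on_def R_g)
  then have "double_star half_line (R_op p0 p1 \<phi> g) t = hardy_op (R_op p0 p1 \<phi> g) t"
    using \<open>t > 0\<close> by (rule double_star_half_line)
  also have "\<dots> = hardy_op (mellin_conv k g) t"
    by (rule hardy_op_cong) (simp add: R_g)
  also have "\<dots> = mellin_conv k (hardy_op g) t"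
    using k g \<open>t > 0\<close> by (rule hardy_op_mellin_conv)
  also have "\<dots> = R_op p0 p1 \<phi> (hardy_op g) t"
    unfolding k_def using R_op_eq_mellin_conv[OF \<phi> hardy_op_antimono[OF g] \<open>t > 0\<close>] ..
  finally show ?thesis
    unfolding g_def double_star_eq_hardy_op .
qed

end
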